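(* On a consistent L$^2$TS $(S,L,\to)$, the relations $\approx_L$ and $=_T^{\lambda}$ coincide: for all $s,t\in S$, $s\approx_L t$ iff $s=_T^{\lambda}t$.
   Context: Fix a set $\mathrm{Act}$ of actions containing a special action $\tau$ and a set $\mathbf{AP}$ of atomic propositions. An L$^2$TS is a triple $(S,L,\to)$ with $L:S\to\mathcal{P}(\mathbf{AP})$ and $\to\subseteq S\times\mathrm{Act}\times S$. It is consistent if (i) $s\xrightarrow{a}t$ implies ($L(s)=L(t)$ iff $a=\tau$); (ii) $s\xrightarrow{a}t$, $s'\xrightarrow{a}t'$ and $L(s)=L(s')$ imply $L(t)=L(t')$; (iii) $s\xrightarrow{a}t$, $s'\xrightarrow{b}t'$, $L(s)=L(s')$ and $L(t)=L(t')$ imply $a=b$. Its associated Kripke structure is $(S,L,\{(s,t)\mid\exists a.\ s\xrightarrow{a}t\})$ and its associated LTS is $(S,\to)$. In the associated Kripke structure, paths are sequences of states $s_0,s_1,\dots$ with consecutive states related, maximal if infinite or ending in a state without successor; $L(\pi)$ is obtained from $L(s_0),L(s_1),\dots$ by contracting maximal (finite or infinite) blocks of equal consecutive entries to one entry; $s\approx_L t$ iff $s$ and $t$ have the same sets $\{L(\pi)\mid\pi$ a maximal path from the state$\}$. In the associated LTS, paths are alternating sequences $s_0,a_1,s_1,\dots$ with $s_{k-1}\xrightarrow{a_k}s_k$, maximal if infinite or ending in a state without outgoing transitions. With the trivial colouring $\mathbf{T}$ assigning a single colour $C$ to every state, $\mathbf{T}(\pi)$ is obtained from $C,a_1,C,a_2,\dots$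 by contracting every finite maximal consecutive subsequence $C,\tau,C,\dots,\tau,C$ and every infinite one $C,\tau,C,\tau,\dots$ to $C$; these are complete $\mathbf{T}$-coloured traces of $s$ when $\pi$ is a maximal path from $s$. On the L$^2$TS, $s=_T^{\lambda}t$ means $L(s)=L(t)$ and $s,t$ have the same complete $\mathbf{T}$-coloured traces in the associated LTS. *)

theory Defs
  imports Main
begin

text \<open>Finite or infinite nonempty-or-empty sequences are represented as
  functions nat => 'x option whose domain is a prefix of the naturals.\<close>

definition seq_wf :: "(nat \<Rightarrow> 'x option) \<Rightarrow> bool" where
  "seq_wf w \<longleftrightarrow> (\<forall>i j. j \<le> i \<longrightarrow> w i \<noteq> None \<longrightarrow> w j \<noteq> None)"

definition consistent ::
  "'act \<Rightarrow> ('s \<Rightarrow> 'ap set) \<Rightarrow> ('s \<Rightarrow> 'act \<Rightarrow> 's \<Rightarrow> bool) \<Rightarrow> bool" where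
  "consistent tau L tr \<longleftrightarrow>
     (\<forall>s a t. tr s a t \<longrightarrow> (L s = L t \<longleftrightarrow> a = tau)) \<and>
     (\<forall>s a t s' t'. tr s a t \<longrightarrow> tr s' a t' \<longrightarrow> L s = L s' \<longrightarrow> L t = L t') \<and>
     (\<forall>s a t s' b t'. tr s a t \<longrightarrow> tr s' b t' \<longrightarrow> L s = L s' \<longrightarrow> L t = L t' \<longrightarrow> a = b)"

definition ksucc :: "('s \<Rightarrow> 'act \<Rightarrow> 's \<Rightarrow> bool) \<Rightarrow> 's \<Rightarrow> 's \<Rightarrow> bool" where
  "ksucc tr s t \<longleftrightarrow> (\<exists>a. tr s a t)"

definition kripke_maxpath ::
  "('s \<Rightarrow> 'act \<Rightarrow> 's \<Rightarrow> bool) \<Rightarrow> 's \<Rightarrow> (nat \<Rightarrow> 's option) \<Rightarrow> bool" where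
  "kripke_maxpath tr s p \<longleftrightarrow> seq_wf p \<and> p 0 = Some s \<and>
     (\<forall>i u v. p i = Some u \<longrightarrow> p (Suc i) = Some v \<longrightarrow> ksucc tr u v) \<and>
     (\<forall>i u. p i = Some u \<longrightarrow> p (Suc i) = None \<longrightarrow> (\<nexists>v. ksucc tr u v))"

text \<open>v is obtained from w by contracting every maximal (finite or infinite)
  block of equal consecutive entries to one entry: h maps positions of w onto
  positions of v, staying put exactly when the entry repeats.\<close>

definition stutter_contract :: "(nat \<Rightarrow> 'x option) \<Rightarrow> (nat \<Rightarrow> 'x option) \<Rightarrow> bool" where
  "stutter_contract w v \<longleftrightarrow> seq_wf v \<and>
     (\<exists>h. h 0 = 0 \<and>
        (\<forall>i. w i \<noteq> None \<longrightarrow> v (h i) = w i) \<and>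
        (\<forall>i. w (Suc i) \<noteq> None \<longrightarrow>
              (if w (Suc i) = w i then h (Suc i) = h i else h (Suc i) = Suc (h i))) \<and>
        (\<forall>k. v k \<noteq> None \<longrightarrow> (\<exists>i. w i \<noteq> None \<and> h i = k)))"

definition label_traces ::
  "('s \<Rightarrow> 'ap set) \<Rightarrow> ('s \<Rightarrow> 'act \<Rightarrow> 's \<Rightarrow> bool) \<Rightarrow> 's \<Rightarrow> (nat \<Rightarrow> 'ap set option) set" where
  "label_traces L tr s =
     {v. \<exists>p. kripke_maxpath tr s p \<and> stutter_contract (\<lambda>i. map_option L (p i)) v}"

definition approx_L ::
  "('s \<Rightarrow> 'ap set) \<Rightarrow> ('s \<Rightarrow> 'act \<Rightarrow> 's \<Rightarrow> bool) \<Rightarrow> 's \<Rightarrow> 's \<Rightarrow> bool" where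
  "approx_L L tr s t \<longleftrightarrow> label_traces L tr s = label_traces L tr t"

definition lts_maxpath ::
  "('s \<Rightarrow> 'act \<Rightarrow> 's \<Rightarrow> bool) \<Rightarrow> 's \<Rightarrow> (nat \<Rightarrow> 's option) \<Rightarrow> (nat \<Rightarrow> 'act) \<Rightarrow> bool" where
  "lts_maxpath tr s p a \<longleftrightarrow> seq_wf p \<and> p 0 = Some s \<and>
     (\<forall>i u v. p i = Some u \<longrightarrow> p (Suc i) = Some v \<longrightarrow> tr u (a i) v) \<and>
     (\<forall>i u. p i = Some u \<longrightarrow> p (Suc i) = None \<longrightarrow> (\<nexists>b v. tr u b v))"

text \<open>The sequence C, a1, C, a2, ... of a path under the trivial colouring;
  the single colour C is Inl ().\<close>

definition coloured_seq ::
  "(nat \<Rightarrow> 's option) \<Rightarrow> (nat \<Rightarrow> 'act) \<Rightarrow> nat \<Rightarrow> (unit + 'act) option" where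
  "coloured_seq p a n =
     (if even n then map_option (\<lambda>_. Inl ()) (p (n div 2))
      else (if p (Suc (n div 2)) \<noteq> None then Some (Inr (a (n div 2))) else None))"

text \<open>v is obtained from w by contracting every maximal finite block
  C,tau,C,...,tau,C and every infinite block C,tau,C,tau,... to C: h maps
  positions of w onto positions of v, staying put inside such a block.\<close>

definition tau_contract ::
  "'act \<Rightarrow> (nat \<Rightarrow> (unit + 'act) option) \<Rightarrow> (nat \<Rightarrow> (unit + 'act) option) \<Rightarrow> bool" where
  "tau_contract tau w v \<longleftrightarrow> seq_wf v \<and>
     (\<exists>h. h 0 = 0 \<and>
        (\<forall>i. w i \<noteq> None \<longrightarrow>
              v (h i) = (if w i = Some (Inr tau) then Some (Inl ()) else w i)) \<and>
        (\<forall>i. w (Suc i) \<noteq> None \<longrightarrow>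
              (if w (Suc i) = Some (Inr tau) \<or> w i = Some (Inr tau)
               then h (Suc i) = h i else h (Suc i) = Suc (h i))) \<and>
        (\<forall>k. v k \<noteq> None \<longrightarrow> (\<exists>i. w i \<noteq> None \<and> h i = k)))"

definition complete_T_traces ::
  "'act \<Rightarrow> ('s \<Rightarrow> 'act \<Rightarrow> 's \<Rightarrow> bool) \<Rightarrow> 's \<Rightarrow> (nat \<Rightarrow> (unit + 'act) option) set" where
  "complete_T_traces tau tr s =
     {v. \<exists>p a. lts_maxpath tr s p a \<and> tau_contract tau (coloured_seq p a) v}"

definition eq_T_lambda ::
  "'act \<Rightarrow> ('s \<Rightarrow> 'ap set) \<Rightarrow> ('s \<Rightarrow> 'act \<Rightarrow> 's \<Rightarrow> bool) \<Rightarrow> 's \<Rightarrow> 's \<Rightarrow> bool" where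
  "eq_T_lambda tau L tr s t \<longleftrightarrow>
     L s = L t \<and> complete_T_traces tau tr s = complete_T_traces tau tr t"

end

theory Submission
  imports Defs
begin

text \<open>Under consistency a transition changes the label exactly when its action is not \<open>tau\<close>,
  and its action is determined by the labels before and after it. Hence contracting the
  \<open>tau\<close>-steps of the coloured sequence of a path is the same as contracting the repeated labels
  of its label sequence and then writing between consecutive labels the unique action that
  connects them. So the complete T-coloured traces of a state are the image of its label
  traces under this map, and the map is injective on the label traces of states with equal
  labels. Since every label trace starts with the label of its state, \<open>approx_L\<close> also forces
  equal labels.\<close>

lemma seq_wf_prefix: "seq_wf w \<Longrightarrow> w j \<noteq> None \<Longrightarrow> i \<le> j \<Longrightarrow> w i \<noteq> None"
  unfolding seq_wf_def by blast

lemma seq_wf_SucD: "seq_wf w \<Longrightarrow> w (Suc i) \<noteq> None \<Longrightarrow> w i \<noteq> None"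
  using seq_wf_prefix[of w "Suc i" i] by simp

lemma seq_wf_map_option [simp]: "seq_wf (\<lambda>i. map_option f (w i)) \<longleftrightarrow> seq_wf w"
  by (simp add: seq_wf_def)

lemma nat_parity_cases [case_names even odd]:
  obtains (even) i where "n = 2 * i" | (odd) i where "n = Suc (2 * i)"
  by (metis evenE oddE Suc_eq_plus1)

lemma coloured_seq_even [simp]: "coloured_seq p a (2 * i) = map_option (\<lambda>_. Inl ()) (p i)"
  by (simp add: coloured_seq_def)

lemma coloured_seq_Suc_odd [simp]:
  "coloured_seq p a (Suc (Suc (2 * i))) = map_option (\<lambda>_. Inl ()) (p (Suc i))"
  using coloured_seq_even[of p a "Suc i"] by simp

lemma coloured_seq_odd [simp]:
  "coloured_seq p a (Suc (2 * i)) = (if p (Suc i) \<noteq> None then Some (Inr (a i)) else None)"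
  by (simp add: coloured_seq_def)

lemma coloured_seq_None_iff: "coloured_seq p a n = None \<longleftrightarrow> p ((n + 1) div 2) = None"
  by (cases n rule: nat_parity_cases) auto

lemma seq_wf_coloured_seq: "seq_wf p \<Longrightarrow> seq_wf (coloured_seq p a)"
  unfolding seq_wf_def[of "coloured_seq p a"] coloured_seq_None_iff
  by (metis seq_wf_prefix div_le_mono add_le_mono1)

text \<open>The common shape of the index maps in \<open>stutter_contract\<close> and \<open>tau_contract\<close>:
  \<open>stay i\<close> says that position \<open>Suc i\<close> is merged into the block of position \<open>i\<close>, and \<open>f\<close>
  renames the entries.\<close>

definition contraction_index ::
  "(nat \<Rightarrow> bool) \<Rightarrow> ('x \<Rightarrow> 'y) \<Rightarrow> (nat \<Rightarrow> 'x option) \<Rightarrow> (nat \<Rightarrow> 'y option) \<Rightarrow> (nat \<Rightarrow> nat) \<Rightarrow> bool"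
where
  "contraction_index stay f w v h \<longleftrightarrow> h 0 = 0 \<and>
     (\<forall>i. w i \<noteq> None \<longrightarrow> v (h i) = map_option f (w i)) \<and>
     (\<forall>i. w (Suc i) \<noteq> None \<longrightarrow> h (Suc i) = (if stay i then h i else Suc (h i))) \<and>
     (\<forall>k. v k \<noteq> None \<longrightarrow> (\<exists>i. w i \<noteq> None \<and> h i = k))"

lemma stutter_contract_iff:
  "stutter_contract w v \<longleftrightarrow> seq_wf v \<and> (\<exists>h. contraction_index (\<lambda>i. w (Suc i) = w i) id w v h)"
  unfolding stutter_contract_def contraction_index_def
  by (simp add: option.map_id if_split_eq1 del: if_split)

lemma tau_contract_iff:
  "tau_contract tau w v \<longleftrightarrow> seq_wf v \<and>
     (\<exists>h. contraction_index (\<lambda>i. w (Suc i) = Some (Inr tau) \<or> w i = Some (Inr tau))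
            (\<lambda>x. if x = Inr tau then Inl () else x) w v h)"
proof -
  have "map_option (\<lambda>x. if x = Inr tau then Inl () else x) (w i) =
      (if w i = Some (Inr tau) then Some (Inl ()) else w i)" for i
    by (cases "w i") auto
  moreover have "(if c then x = y else x = z) \<longleftrightarrow> x = (if c then y else z)" for c and x y z :: nat
    by simp
  ultimately show ?thesis
    unfolding tau_contract_def contraction_index_def by presburger
qed

lemma contraction_index_at:
  "contraction_index stay f w v h \<Longrightarrow> w i \<noteq> None \<Longrightarrow> v (h i) = map_option f (w i)"
  unfolding contraction_index_def by simp

lemma unit_steps_hit_below:
  assumes "seq_wf w" and "h 0 = 0" and "\<And>i. w (Suc i) \<noteq> None \<Longrightarrow> h (Suc i) \<le> Suc (h i)"
  shows "w i \<noteq> None \<Longrightarrow> k \<le> h i \<Longrightarrow> \<exists>j. w j \<noteq> None \<and> h j = k"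
proof (induction i)
  case 0
  then show ?case using assms(2) by auto
next
  case (Suc i)
  then have "w i \<noteq> None" using seq_wf_SucD[OF assms(1)] by blast
  then show ?case
    using Suc assms(3)[of i] by (cases "k \<le> h i") (auto intro: le_antisym)
qed

lemma unit_steps_cross:
  assumes "seq_wf w" and "h 0 = 0"
    and "\<And>i. w (Suc i) \<noteq> None \<Longrightarrow> h (Suc i) = h i \<or> h (Suc i) = Suc (h i)"
  shows "w j \<noteq> None \<Longrightarrow> h j = Suc k \<Longrightarrow> \<exists>i. w (Suc i) \<noteq> None \<and> h i = k \<and> h (Suc i) = Suc k"
proof (induction j)
  case 0
  then show ?case using assms(2) by simp
next
  case (Suc j)
  then have "w j \<noteq> None" using seq_wf_SucD[OF assms(1)] by blast
  then show ?case using Suc assms(3)[of j] by auto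
qed

lemma contraction_index_agree:
  assumes "seq_wf w" "contraction_index stay f w v h" "contraction_index stay f w v' g"
  shows "w i \<noteq> None \<Longrightarrow> h i = g i"
proof (induction i)
  case 0
  then show ?case using assms(2,3) by (simp add: contraction_index_def)
next
  case (Suc i)
  then have "h i = g i" using seq_wf_SucD[OF assms(1)] by blast
  then show ?case using Suc.prems assms(2,3) by (simp add: contraction_index_def)
qed

lemma contraction_index_unique:
  assumes "seq_wf w" "contraction_index stay f w v h" "contraction_index stay f w v' g"
  shows "v = v'"
proof
  fix k
  have at_index: "w i \<noteq> None \<Longrightarrow> v (h i) = map_option f (w i) \<and> v' (g i) = map_option f (w i)" for i
    using assms(2,3) unfolding contraction_index_def by blast
  have "v k \<noteq> None \<or> v' k \<noteq> None \<Longrightarrow> \<exists>i. w i \<noteq> None \<and> h i = k"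
    using assms(2,3) contraction_index_agree[OF assms] unfolding contraction_index_def by metis
  then show "v k = v' k"
    using at_index contraction_index_agree[OF assms] by metis
qed

primrec stutter_count :: "(nat \<Rightarrow> 'x option) \<Rightarrow> nat \<Rightarrow> nat" where
  "stutter_count w 0 = 0"
| "stutter_count w (Suc i) = (if w (Suc i) = w i then stutter_count w i else Suc (stutter_count w i))"

lemma stutter_count_mono: "mono (stutter_count w)"
  by (rule mono_iff_le_Suc[THEN iffD2]) simp

lemma stutter_count_eq_imp_eq:
  assumes "seq_wf w" "w i \<noteq> None" "w j \<noteq> None" "stutter_count w i = stutter_count w j"
  shows "w i = w j"
proof -
  have "w i = w j" if "i \<le> j" "w j \<noteq> None" "stutter_count w i = stutter_count w j" for i j
    using that
  proof (induction j rule: dec_induct)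
    case (step j)
    have "stutter_count w i \<le> stutter_count w j" "stutter_count w j \<le> stutter_count w (Suc j)"
      using stutter_count_mono \<open>i \<le> j\<close> by (auto dest: monoD)
    then show ?case
      using step seq_wf_SucD[OF assms(1)] by (auto split: if_splits)
  qed simp
  then show ?thesis
    using assms(2-4) by (metis nat_le_linear)
qed

lemma stutter_contract_exists:
  assumes "seq_wf w"
  shows "\<exists>v. stutter_contract w v"
proof -
  let ?h = "stutter_count w"
  let ?hit = "\<lambda>k i. w i \<noteq> None \<and> ?h i = k"
  define v where "v k = (if \<exists>i. ?hit k i then w (SOME i. ?hit k i) else None)" for k
  have v_at: "v (?h i) = w i" if "w i \<noteq> None" for i
  proof -
    define j where "j = (SOME j. ?hit (?h i) j)"
    have ex: "\<exists>j. ?hit (?h i) j"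
      using that by blast
    then have "?hit (?h i) j"
      unfolding j_def by (rule someI_ex)
    moreover have "v (?h i) = w j"
      unfolding v_def j_def[symmetric] using ex by (rule if_P)
    ultimately show ?thesis
      using that stutter_count_eq_imp_eq[OF assms, of j i] by simp
  qed
  have v_dom: "v k \<noteq> None \<longleftrightarrow> (\<exists>i. ?hit k i)" for k
  proof
    show "v k \<noteq> None \<Longrightarrow> \<exists>i. ?hit k i"
      unfolding v_def by presburger
    show "\<exists>i. ?hit k i \<Longrightarrow> v k \<noteq> None"
      using v_at by force
  qed
  have "seq_wf v"
    unfolding seq_wf_def v_dom using unit_steps_hit_below[OF assms, of ?h] by fastforce
  moreover have "contraction_index (\<lambda>i. w (Suc i) = w i) id w v ?h"
    unfolding contraction_index_def using v_at v_dom by (simp add: option.map_id)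
  ultimately show ?thesis
    unfolding stutter_contract_iff by blast
qed

definition lts_path ::
  "('s \<Rightarrow> 'act \<Rightarrow> 's \<Rightarrow> bool) \<Rightarrow> (nat \<Rightarrow> 's option) \<Rightarrow> (nat \<Rightarrow> 'act) \<Rightarrow> bool"
where
  "lts_path tr p a \<longleftrightarrow>
     seq_wf p \<and> (\<forall>i u v. p i = Some u \<longrightarrow> p (Suc i) = Some v \<longrightarrow> tr u (a i) v)"

lemma lts_maxpath_imp_lts_path: "lts_maxpath tr s p a \<Longrightarrow> lts_path tr p a"
  unfolding lts_maxpath_def lts_path_def by blast

lemma lts_maxpath_imp_kripke_maxpath: "lts_maxpath tr s p a \<Longrightarrow> kripke_maxpath tr s p"
  unfolding lts_maxpath_def kripke_maxpath_def ksucc_def by blast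

lemma kripke_maxpath_imp_lts_maxpath:
  assumes "kripke_maxpath tr s p"
  shows "\<exists>a. lts_maxpath tr s p a"
proof -
  define a where "a i = (SOME b. tr (the (p i)) b (the (p (Suc i))))" for i
  have "tr u (a i) v" if "p i = Some u" "p (Suc i) = Some v" for i u v
  proof -
    have "\<exists>b. tr u b v"
      using assms that unfolding kripke_maxpath_def ksucc_def by blast
    then show ?thesis
      unfolding a_def that by simp (rule someI_ex)
  qed
  then have "lts_maxpath tr s p a"
    using assms unfolding kripke_maxpath_def lts_maxpath_def ksucc_def by blast
  then show ?thesis
    by blast
qed

lemma kripke_maxpath_exists: "\<exists>p. kripke_maxpath tr s p"
proof -
  define next_state where
    "next_state u = (if \<exists>v. ksucc tr u v then Some (SOME v. ksucc tr u v) else None)" for u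
  define p where "p i = ((\<lambda>q. Option.bind q next_state) ^^ i) (Some s)" for i
  have p_Suc: "p (Suc i) = Option.bind (p i) next_state" for i
    by (simp add: p_def)
  have "p i = None \<Longrightarrow> p (i + d) = None" for i d
    by (induction d) (simp_all add: p_Suc)
  then have "seq_wf p"
    unfolding seq_wf_def by (metis le_Suc_ex)
  moreover have "p 0 = Some s"
    by (simp add: p_def)
  moreover have "ksucc tr u v" if "p i = Some u" "p (Suc i) = Some v" for i u v
    using that someI_ex[of "ksucc tr u"] by (auto simp: p_Suc next_state_def split: if_splits)
  moreover have "\<nexists>v. ksucc tr u v" if "p i = Some u" "p (Suc i) = None" for i u
    using that by (auto simp: p_Suc next_state_def split: if_splits)
  ultimately show ?thesis
    unfolding kripke_maxpath_def by blast
qed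

lemma label_traces_nonempty: "label_traces L tr s \<noteq> {}"
proof -
  obtain p where "kripke_maxpath tr s p"
    using kripke_maxpath_exists[of tr s] by blast
  moreover from this have "seq_wf (\<lambda>i. map_option L (p i))"
    unfolding kripke_maxpath_def by simp
  then obtain v where "stutter_contract (\<lambda>i. map_option L (p i)) v"
    using stutter_contract_exists by blast
  ultimately show ?thesis
    unfolding label_traces_def by blast
qed

lemma label_tracesE:
  assumes "v \<in> label_traces L tr s"
  obtains p h where "kripke_maxpath tr s p"
    and "contraction_index (\<lambda>i. map_option L (p (Suc i)) = map_option L (p i)) id
           (\<lambda>i. map_option L (p i)) v h"
  using assms unfolding label_traces_def stutter_contract_iff by blast

lemma label_traces_start:
  assumes "v \<in> label_traces L tr s"
  shows "v 0 = Some (L s)"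
proof -
  obtain p h where path: "kripke_maxpath tr s p"
    and index: "contraction_index (\<lambda>i. map_option L (p (Suc i)) = map_option L (p i)) id
           (\<lambda>i. map_option L (p i)) v h"
    using assms by (rule label_tracesE)
  have "p 0 = Some s" and "h 0 = 0"
    using path index unfolding kripke_maxpath_def contraction_index_def by blast+
  then show ?thesis
    using contraction_index_at[OF index, of 0] by simp
qed

lemma label_traces_step:
  assumes "v \<in> label_traces L tr s" and "v (Suc k) \<noteq> None"
  obtains x b y where "tr x b y" "v k = Some (L x)" "v (Suc k) = Some (L y)"
proof -
  obtain p h where path: "kripke_maxpath tr s p"
    and index: "contraction_index (\<lambda>i. map_option L (p (Suc i)) = map_option L (p i)) id
           (\<lambda>i. map_option L (p i)) v h"
    using assms(1) by (rule label_tracesE)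
  have wf: "seq_wf p"
    using path unfolding kripke_maxpath_def by blast
  have "\<exists>j. p j \<noteq> None \<and> h j = Suc k"
    using index assms(2) unfolding contraction_index_def by simp
  then obtain i where i: "p (Suc i) \<noteq> None" "h i = k" "h (Suc i) = Suc k"
    using unit_steps_cross[OF wf, of h] index unfolding contraction_index_def by simp metis
  then obtain x y where xy: "p i = Some x" "p (Suc i) = Some y"
    using seq_wf_SucD[OF wf] by blast
  then obtain b where "tr x b y"
    using path unfolding kripke_maxpath_def ksucc_def by blast
  moreover have "v k = Some (L x)" "v (Suc k) = Some (L y)"
    using contraction_index_at[OF index, of i] contraction_index_at[OF index, of "Suc i"] xy i by simp_all
  ultimately show thesis
    using that by blast
qed

definition label_action ::
  "('s \<Rightarrow> 'ap set) \<Rightarrow> ('s \<Rightarrow> 'act \<Rightarrow> 's \<Rightarrow> bool) \<Rightarrow> 'ap set \<Rightarrow> 'ap set \<Rightarrow> 'act"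
where
  "label_action L tr l l' = (SOME b. \<exists>x y. tr x b y \<and> L x = l \<and> L y = l')"

lemma label_action_eq:
  assumes "consistent tau L tr" and "tr x b y"
  shows "label_action L tr (L x) (L y) = b"
proof -
  have "\<exists>x' y'. tr x' (label_action L tr (L x) (L y)) y' \<and> L x' = L x \<and> L y' = L y"
    unfolding label_action_def using assms(2)
    by (intro someI_ex[where P = "\<lambda>b. \<exists>x' y'. tr x' b y' \<and> L x' = L x \<and> L y' = L y"]) blast
  then show ?thesis
    using assms unfolding consistent_def by metis
qed

definition coloured_of_labels ::
  "('s \<Rightarrow> 'ap set) \<Rightarrow> ('s \<Rightarrow> 'act \<Rightarrow> 's \<Rightarrow> bool) \<Rightarrow> (nat \<Rightarrow> 'ap set option) \<Rightarrow> nat \<Rightarrow> (unit + 'act) option"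
where
  "coloured_of_labels L tr v = coloured_seq v (\<lambda>k. label_action L tr (the (v k)) (the (v (Suc k))))"

lemma coloured_of_labels_even [simp]:
  "coloured_of_labels L tr v (2 * k) = map_option (\<lambda>_. Inl ()) (v k)"
  by (simp add: coloured_of_labels_def)

lemma coloured_of_labels_odd [simp]:
  "coloured_of_labels L tr v (Suc (2 * k)) =
     (if v (Suc k) \<noteq> None then Some (Inr (label_action L tr (the (v k)) (the (v (Suc k))))) else None)"
  by (simp add: coloured_of_labels_def)

text \<open>State \<open>i\<close> of a path sits at position \<open>2 * i\<close> of its coloured sequence and is sent to
  the colour of its block at \<open>2 * h i\<close>; an action is merged into that block if it is \<open>tau\<close>
  and otherwise sent just behind it.\<close>

definition coloured_index :: "'act \<Rightarrow> (nat \<Rightarrow> 'act) \<Rightarrow> (nat \<Rightarrow> nat) \<Rightarrow> nat \<Rightarrow> nat" where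
  "coloured_index tau a h n =
     (if odd n \<and> a (n div 2) \<noteq> tau then Suc (2 * h (n div 2)) else 2 * h (n div 2))"

lemma coloured_index_even [simp]: "coloured_index tau a h (2 * i) = 2 * h i"
  by (simp add: coloured_index_def)

lemma coloured_index_odd [simp]:
  "coloured_index tau a h (Suc (2 * i)) = (if a i = tau then 2 * h i else Suc (2 * h i))"
  by (simp add: coloured_index_def)

lemma coloured_index_Suc_odd [simp]: "coloured_index tau a h (Suc (Suc (2 * i))) = 2 * h (Suc i)"
  using coloured_index_even[of tau a h "Suc i"] by simp

context
  fixes tau :: 'act and L :: "'s \<Rightarrow> 'ap set" and tr p a v h
  assumes consistent: "consistent tau L tr"
    and path: "lts_path tr p a"
    and labels_wf: "seq_wf v"
    and index: "contraction_index (\<lambda>i. map_option L (p (Suc i)) = map_option L (p i)) id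
                  (\<lambda>i. map_option L (p i)) v h"
begin

lemma path_step:
  assumes "p (Suc i) = Some y"
  obtains x where "p i = Some x" "tr x (a i) y" "a i = tau \<longleftrightarrow> L x = L y"
proof -
  obtain x where "p i = Some x"
    using path assms seq_wf_SucD unfolding lts_path_def by blast
  moreover have "tr x (a i) y"
    using path assms calculation unfolding lts_path_def by blast
  ultimately show thesis
    using that consistent unfolding consistent_def by blast
qed

lemma labels_at_index: "p i = Some x \<Longrightarrow> v (h i) = Some (L x)"
  using contraction_index_at[OF index, of i] by simp

lemma index_Suc:
  assumes "p (Suc i) = Some y"
  shows "h (Suc i) = (if a i = tau then h i else Suc (h i))"
proof -
  obtain x where "p i = Some x" "a i = tau \<longleftrightarrow> L x = L y"
    using assms by (rule path_step)
  then show ?thesis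
    using index assms unfolding contraction_index_def by auto
qed

lemma coloured_index_at:
  assumes "coloured_seq p a n \<noteq> None"
  shows "coloured_of_labels L tr v (coloured_index tau a h n) =
           map_option (\<lambda>x. if x = Inr tau then Inl () else x) (coloured_seq p a n)"
proof (cases n rule: nat_parity_cases)
  case (even i)
  then show ?thesis
    using assms labels_at_index by auto
next
  case (odd i)
  then obtain y where y: "p (Suc i) = Some y"
    using assms by (auto split: if_splits)
  then obtain x where x: "p i = Some x" "tr x (a i) y" "a i = tau \<longleftrightarrow> L x = L y"
    by (rule path_step)
  show ?thesis
  proof (cases "a i = tau")
    case True
    then show ?thesis
      using odd x y labels_at_index by simp
  next
    case False
    then have "v (Suc (h i)) = Some (L y)"
      using index_Suc[OF y] labels_at_index[OF y] by simp
    then show ?thesis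
      using odd False x y labels_at_index label_action_eq[OF consistent x(2)] by simp
  qed
qed

lemma coloured_index_Suc:
  assumes "coloured_seq p a (Suc n) \<noteq> None"
  shows "coloured_index tau a h (Suc n) =
    (if coloured_seq p a (Suc n) = Some (Inr tau) \<or> coloured_seq p a n = Some (Inr tau)
     then coloured_index tau a h n else Suc (coloured_index tau a h n))"
proof (cases n rule: nat_parity_cases)
  case (even i)
  then show ?thesis
    using assms by (simp split: if_splits)
next
  case (odd i)
  then obtain y where "p (Suc i) = Some y"
    using assms by auto
  then show ?thesis
    using odd index_Suc[of i y] by simp
qed

lemma coloured_index_onto:
  assumes "coloured_of_labels L tr v k \<noteq> None"
  shows "\<exists>n. coloured_seq p a n \<noteq> None \<and> coloured_index tau a h n = k"
proof (cases k rule: nat_parity_cases)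
  case (even m)
  then have "\<exists>i. p i \<noteq> None \<and> h i = m"
    using assms index unfolding contraction_index_def by auto
  then obtain i where "p i \<noteq> None" "h i = m"
    by blast
  then show ?thesis
    using even by (intro exI[of _ "2 * i"]) simp
next
  case (odd m)
  have wf: "seq_wf p"
    using path unfolding lts_path_def by blast
  have "v (Suc m) \<noteq> None"
    using assms odd by (simp split: if_splits)
  then obtain j where "p j \<noteq> None" "h j = Suc m"
    using index unfolding contraction_index_def by blast
  moreover have "h 0 = 0" "\<And>i. p (Suc i) \<noteq> None \<Longrightarrow> h (Suc i) = h i \<or> h (Suc i) = Suc (h i)"
    using index unfolding contraction_index_def by auto
  ultimately obtain i where "p (Suc i) \<noteq> None" "h i = m" "h (Suc i) = Suc m"
    using unit_steps_cross[OF wf] by metis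
  moreover from this obtain y where "p (Suc i) = Some y"
    by blast
  ultimately have "coloured_seq p a (Suc (2 * i)) \<noteq> None" "coloured_index tau a h (Suc (2 * i)) = k"
    using odd index_Suc by (auto split: if_splits)
  then show ?thesis
    by blast
qed

lemma tau_contract_coloured_of_labels: "tau_contract tau (coloured_seq p a) (coloured_of_labels L tr v)"
proof -
  have "seq_wf (coloured_of_labels L tr v)"
    unfolding coloured_of_labels_def using labels_wf by (rule seq_wf_coloured_seq)
  moreover have "coloured_index tau a h 0 = 0"
    using index unfolding coloured_index_def contraction_index_def by simp
  ultimately show ?thesis
    unfolding tau_contract_iff contraction_index_def
    using coloured_index_at coloured_index_Suc coloured_index_onto by blast
qed

end

lemma stutter_contract_imp_tau_contract:
  assumes "consistent tau L tr" and "lts_path tr p a" and "stutter_contract (\<lambda>i. map_option L (p i)) v"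
  shows "tau_contract tau (coloured_seq p a) (coloured_of_labels L tr v)"
proof -
  obtain h where "seq_wf v"
    and "contraction_index (\<lambda>i. map_option L (p (Suc i)) = map_option L (p i)) id
           (\<lambda>i. map_option L (p i)) v h"
    using assms(3) unfolding stutter_contract_iff by blast
  then show ?thesis
    by (rule tau_contract_coloured_of_labels[OF assms(1,2)])
qed

lemma tau_contract_unique:
  assumes "seq_wf w" and "tau_contract tau w u" and "tau_contract tau w u'"
  shows "u = u'"
proof -
  let ?stay = "\<lambda>i. w (Suc i) = Some (Inr tau) \<or> w i = Some (Inr tau)"
  let ?f = "\<lambda>x. if x = Inr tau then Inl () else x"
  obtain h g where "contraction_index ?stay ?f w u h" and "contraction_index ?stay ?f w u' g"
    using assms(2,3) unfolding tau_contract_iff by blast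
  then show ?thesis
    by (rule contraction_index_unique[OF assms(1)])
qed

lemma complete_T_traces_eq_image:
  assumes "consistent tau L tr"
  shows "complete_T_traces tau tr s = coloured_of_labels L tr ` label_traces L tr s"
proof (intro equalityI subsetI)
  fix u
  assume "u \<in> complete_T_traces tau tr s"
  then obtain p a where path: "lts_maxpath tr s p a" and u: "tau_contract tau (coloured_seq p a) u"
    unfolding complete_T_traces_def by blast
  have wf: "seq_wf p"
    using path unfolding lts_maxpath_def by blast
  then have "seq_wf (\<lambda>i. map_option L (p i))"
    by simp
  then obtain v where v: "stutter_contract (\<lambda>i. map_option L (p i)) v"
    using stutter_contract_exists by blast
  have "v \<in> label_traces L tr s"
    unfolding label_traces_def using lts_maxpath_imp_kripke_maxpath[OF path] v by blast
  moreover have "u = coloured_of_labels L tr v"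
    using tau_contract_unique[OF seq_wf_coloured_seq[OF wf] u]
      stutter_contract_imp_tau_contract[OF assms lts_maxpath_imp_lts_path[OF path] v] .
  ultimately show "u \<in> coloured_of_labels L tr ` label_traces L tr s"
    by blast
next
  fix u
  assume "u \<in> coloured_of_labels L tr ` label_traces L tr s"
  then obtain v where u: "u = coloured_of_labels L tr v" and "v \<in> label_traces L tr s"
    by blast
  then obtain p where path: "kripke_maxpath tr s p" and v: "stutter_contract (\<lambda>i. map_option L (p i)) v"
    unfolding label_traces_def by blast
  obtain a where "lts_maxpath tr s p a"
    using kripke_maxpath_imp_lts_maxpath[OF path] by blast
  moreover from this have "tau_contract tau (coloured_seq p a) u"
    unfolding u by (rule stutter_contract_imp_tau_contract[OF assms lts_maxpath_imp_lts_path v])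
  ultimately show "u \<in> complete_T_traces tau tr s"
    unfolding complete_T_traces_def by blast
qed

lemma coloured_of_labels_eq_imp_eq:
  assumes "consistent tau L tr" and v: "v \<in> label_traces L tr s" and v': "v' \<in> label_traces L tr t"
    and "L s = L t" and eq: "coloured_of_labels L tr v = coloured_of_labels L tr v'"
  shows "v = v'"
proof
  have dom: "v k = None \<longleftrightarrow> v' k = None" for k
    using fun_cong[OF eq, of "2 * k"] by (cases "v k"; cases "v' k") auto
  fix k
  show "v k = v' k"
  proof (induction k)
    case 0
    show ?case
      using label_traces_start[OF v] label_traces_start[OF v'] \<open>L s = L t\<close> by simp
  next
    case (Suc k)
    show ?case
    proof (cases "v (Suc k) = None")
      case False
      obtain x b y where t: "tr x b y" and x: "v k = Some (L x)" and y: "v (Suc k) = Some (L y)"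
        using label_traces_step[OF v False] .
      have "v' (Suc k) \<noteq> None"
        using False dom by simp
      then obtain x' b' y' where t': "tr x' b' y'"
        and x': "v' k = Some (L x')" and y': "v' (Suc k) = Some (L y')"
        by (rule label_traces_step[OF v'])
      have "b = b'"
        using fun_cong[OF eq, of "Suc (2 * k)"] x y x' y'
          label_action_eq[OF assms(1) t] label_action_eq[OF assms(1) t'] by simp
      moreover have "L x = L x'"
        using Suc.IH x x' by simp
      ultimately have "L y = L y'"
        using assms(1) t t' unfolding consistent_def by blast
      then show ?thesis
        using y y' by simp
    qed (use dom in simp)
  qed
qed

lemma coloured_of_labels_inj_on:
  assumes "consistent tau L tr" and "L s = L t"
  shows "inj_on (coloured_of_labels L tr) (label_traces L tr s \<union> label_traces L tr t)"
proof (rule inj_onI)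
  fix v v'
  assume "v \<in> label_traces L tr s \<union> label_traces L tr t" "v' \<in> label_traces L tr s \<union> label_traces L tr t"
    and "coloured_of_labels L tr v = coloured_of_labels L tr v'"
  then show "v = v'"
    using coloured_of_labels_eq_imp_eq[OF assms(1) _ _ _ \<open>coloured_of_labels L tr v = _\<close>] assms(2)
    by (metis UnE)
qed

lemma label_traces_eq_imp_label_eq:
  assumes "label_traces L tr s = label_traces L tr t"
  shows "L s = L t"
proof -
  obtain v where v: "v \<in> label_traces L tr s"
    using label_traces_nonempty[of L tr s] by blast
  then have "v \<in> label_traces L tr t"
    using assms by simp
  then show ?thesis
    using label_traces_start[OF v] label_traces_start[of v L tr t] by simp
qed

theorem theorem9p2:
  fixes tau :: 'act and L :: "'s \<Rightarrow> 'ap set" and tr :: "'s \<Rightarrow> 'act \<Rightarrow> 's \<Rightarrow> bool"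
  assumes "consistent tau L tr"
  shows "\<forall>s t. approx_L L tr s t \<longleftrightarrow> eq_T_lambda tau L tr s t"
proof (intro allI)
  fix s t
  show "approx_L L tr s t \<longleftrightarrow> eq_T_lambda tau L tr s t"
  proof (cases "L s = L t")
    case True
    then show ?thesis
      unfolding approx_L_def eq_T_lambda_def complete_T_traces_eq_image[OF assms]
      using inj_on_Un_image_eq_iff[OF coloured_of_labels_inj_on[OF assms True]] by blast
  next
    case False
    then show ?thesis
      unfolding approx_L_def eq_T_lambda_def using label_traces_eq_imp_label_eq[of L tr s t] by blast
  qed
qed

end
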